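(* Let $0<q<\infty$ and $\frac{q}{q+1}<p<\infty$, and let $r=\frac{pq}{pq+p-q}$ (equivalently $\frac1p+\frac1r=1+\frac1q$). Then $$\left(\frac{\sin_{p,q}x}{x}\right)^p+\left(\frac{\operatorname{tam}_{p,q}x}{x}\right)^r>2 \quad \text{for all } x\in\left(0,\tfrac{\pi_{p,q}}{2}\right),$$ and $$\left(\frac{\sinh_{p,q}x}{x}\right)^p+\left(\frac{\operatorname{tamh}_{p,q}x}{x}\right)^r>2 \quad \text{for all } x\in\left(0,\tfrac{\pi_{r,q}}{2}\right).$$
   Context: For $0<q<\infty$ and $\frac{q}{q+1}<p<\infty$: let $F_{p,q}(y)=\int_0^y (1-t^q)^{-1/p}\,dt$ for $y\in[0,1)$ and $\pi_{p,q}=2\int_0^1(1-t^q)^{-1/p}\,dt\in(0,\infty]$ (it equals $\infty$ when $p\le 1$). The function $\sin_{p,q}:[0,\pi_{p,q}/2)\to[0,1)$ is the inverse of $F_{p,q}$, $\cos_{p,q}x=\frac{d}{dx}\sin_{p,q}x$, and $\operatorname{tam}_{p,q}x=\sin_{p,q}x/\cos_{p,q}^{p/q}x$. Let $G_{p,q}(y)=\int_0^y(1+t^q)^{-1/p}\,dt$ for $y\in[0,\infty)$; its range is $[0,\pi_{r,q}/2)$ with $r=\frac{pq}{pq+p-q}$ (which also satisfies $\frac{q}{q+1}<r<\infty$). The function $\sinh_{p,q}:[0,\pi_{r,q}/2)\to[0,\infty)$ is the inverse of $G_{p,q}$, $\cosh_{p,q}x=\frac{d}{dx}\sinh_{p,q}x$,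 and $\operatorname{tamh}_{p,q}x=\sinh_{p,q}x/\cosh_{p,q}^{p/q}x$. *)

theory Defs
  imports "HOL-Analysis.Analysis"
begin

definition F_pq :: "real \<Rightarrow> real \<Rightarrow> real \<Rightarrow> real" where
  "F_pq p q y = integral {0..y} (\<lambda>t. (1 - t powr q) powr (-1/p))"

definition pi_pq :: "real \<Rightarrow> real \<Rightarrow> ennreal" where
  "pi_pq p q = 2 * (\<integral>\<^sup>+ t. indicator {0..<1} t * ennreal ((1 - t powr q) powr (-1/p)) \<partial>lborel)"

definition sin_pq :: "real \<Rightarrow> real \<Rightarrow> real \<Rightarrow> real" where
  "sin_pq p q x = (THE y. y \<in> {0..<1} \<and> F_pq p q y = x)"

definition cos_pq :: "real \<Rightarrow> real \<Rightarrow> real \<Rightarrow> real" where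
  "cos_pq p q x = deriv (sin_pq p q) x"

definition tam_pq :: "real \<Rightarrow> real \<Rightarrow> real \<Rightarrow> real" where
  "tam_pq p q x = sin_pq p q x / (cos_pq p q x) powr (p / q)"

definition G_pq :: "real \<Rightarrow> real \<Rightarrow> real \<Rightarrow> real" where
  "G_pq p q y = integral {0..y} (\<lambda>t. (1 + t powr q) powr (-1/p))"

definition sinh_pq :: "real \<Rightarrow> real \<Rightarrow> real \<Rightarrow> real" where
  "sinh_pq p q x = (THE y. y \<ge> 0 \<and> G_pq p q y = x)"

definition cosh_pq :: "real \<Rightarrow> real \<Rightarrow> real \<Rightarrow> real" where
  "cosh_pq p q x = deriv (sinh_pq p q) x"

definition tamh_pq :: "real \<Rightarrow> real \<Rightarrow> real \<Rightarrow> real" where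
  "tamh_pq p q x = sinh_pq p q x / (cosh_pq p q x) powr (p / q)"

end

theory Submission
  imports Defs
begin

(* Write y = sin_{p,q} x (resp. sinh_{p,q} x) and u = 1 - y^q (resp. 1 + y^q). Inverting the
   integral gives cos = u^(1/p), hence tam = y u^(-1/q). With a = 1/(p(q+1)) the key estimate is
   x = F(y) < y u^(-a): the difference of the two sides has derivative
   u^(-a-1) ((1 - s) u + s - u^(1-s)) with s = q a in (0,1), which is positive by the strict
   weighted AM-GM inequality. Thus w = y/x > u^a, and the two summands A = w^p and
   B = w^r u^(-r/q) satisfy A B > u^(a(p+r) - r/q) = 1, so A + B > 2. In the hyperbolic case the
   substitution t -> t (1 - t^q)^(-1/q) turns F_{r,q} into G_{p,q}, which shows that every
   x < pi_{r,q}/2 is a value of G_{p,q}. *)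

lemma weighted_AM_GM_strict:
  fixes s u :: real
  assumes s: "0 < s" "s < 1" and u: "0 < u" "u \<noteq> 1"
  shows "u powr (1 - s) < (1 - s) * u + s"
proof -
  have exp_gt: "1 + z < exp z" if "z \<noteq> 0" for z :: real
    using ln_le_minus_one[of "exp z"] ln_eq_minus_one[of "exp z"] that by fastforce
  have "ln u \<noteq> 0" using u by simp
  then have "1 = (1 - s) * (1 + s * ln u) + s * (1 + (s - 1) * ln u)"
    by (simp add: algebra_simps)
  also have "\<dots> < (1 - s) * u powr s + s * u powr (s - 1)"
    using s \<open>ln u \<noteq> 0\<close> u(1)
    by (intro add_strict_mono mult_strict_left_mono) (auto simp: powr_def intro!: exp_gt)
  finally have "u powr (1 - s) * 1 < u powr (1 - s) * ((1 - s) * u powr s + s * u powr (s - 1))"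
    using u by (intro mult_strict_left_mono) auto
  also have "\<dots> = (1 - s) * u + s"
    using u by (simp add: algebra_simps flip: powr_add)
  finally show ?thesis by simp
qed

lemma sum_gt_two_if_prod_gt_one:
  fixes a b :: real
  assumes "0 < a" "0 < b" "1 < a * b"
  shows "2 < a + b"
proof (rule ccontr)
  assume "\<not> 2 < a + b"
  then have "(a + b)^2 \<le> 2^2" using assms by (intro power_mono) auto
  moreover have "4 * (a * b) \<le> (a + b)^2" using sum_squares_ge_zero[of "a - b" 0]
    by (simp add: power2_eq_square algebra_simps)
  ultimately show False using assms by simp
qed

lemma powr_sum_gt_two:
  fixes p q r u w :: real
  assumes q: "0 < q" and pq: "q / (q + 1) < p" and r: "r = p * q / (p * q + p - q)"
    and u: "0 < u" and w: "u powr (1 / (p * (q + 1))) < w"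
  shows "w powr p + (w * u powr (- 1 / q)) powr r > 2"
proof -
  have p: "0 < p" by (rule order.strict_trans[OF divide_pos_pos pq]) (use q in auto)
  have D: "0 < p * q + p - q" using pq q by (simp add: field_simps)
  have r_pos: "0 < r" unfolding r using D p q by simp
  have "p + r = p * (p * (q + 1)) / (p * q + p - q)"
    unfolding r using D by (simp add: field_simps)
  then have "(p + r) / (p * (q + 1)) = p / (p * q + p - q)"
    using p q by simp
  moreover have "r / q = p / (p * q + p - q)"
    unfolding r using q by simp
  ultimately have exponents: "(p + r) / (p * (q + 1)) = r / q" by simp
  have "1 = (u powr (1 / (p * (q + 1)))) powr (p + r) * u powr (- r / q)"
    using u by (simp add: powr_powr exponents flip: powr_add)
  also have "\<dots> < w powr (p + r) * u powr (- r / q)"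
    using w u p r_pos by (intro mult_strict_right_mono powr_less_mono2) auto
  also have "\<dots> = w powr p * (w * u powr (- 1 / q)) powr r"
    using w u by (simp add: powr_add powr_mult powr_powr)
  finally show ?thesis
    using w u by (intro sum_gt_two_if_prod_gt_one) auto
qed

lemma has_real_derivative_THE_inverse:
  fixes f f' g :: "real \<Rightarrow> real"
  assumes g: "\<And>x. g x = (THE y. y \<in> D \<and> f y = x)"
    and mono: "strict_mono_on D f"
    and ab: "a < y" "y < b" "{a..b} \<subseteq> D"
    and f': "\<And>z. z \<in> {a..b} \<Longrightarrow> (f has_real_derivative f' z) (at z)"
    and nz: "f' y \<noteq> 0"
  shows "g (f y) = y" "(g has_real_derivative inverse (f' y)) (at (f y))"
proof -
  have gf: "g (f z) = z" if "z \<in> {a..b}" for z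
    unfolding g
  proof (rule the_equality)
    show "z \<in> D \<and> f z = f z" using that ab(3) by auto
    show "w = z" if "w \<in> D \<and> f w = f z" for w
      using that \<open>z \<in> {a..b}\<close> ab(3) inj_onD[OF strict_mono_on_imp_inj_on[OF mono]] by blast
  qed
  then show gfy: "g (f y) = y" using ab(1,2) by simp
  have cont: "isCont f z" if "z \<in> {a..b}" for z
    using f'[OF that] by (rule DERIV_isCont)
  then have "continuous_on {a..b} f"
    by (intro continuous_at_imp_continuous_on) auto
  have "f a < f y" "f y < f b"
    using ab by (auto intro!: strict_mono_onD[OF mono])
  moreover have "f (g w) = w" if w: "f a < w" "w < f b" for w
  proof -
    obtain z where "a \<le> z" "z \<le> b" "f z = w"
      using IVT'[of f a w b] w ab(1,2) \<open>continuous_on {a..b} f\<close> by auto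
    then show ?thesis using gf by auto
  qed
  moreover have "isCont g (f y)"
    by (rule isCont_inverse_function2[OF ab(1,2)]) (use gf cont in auto)
  moreover have "(f has_real_derivative f' y) (at (g (f y)))"
    using f' ab(1,2) by (simp add: gfy)
  ultimately show "(g has_real_derivative inverse (f' y)) (at (f y))"
    by (intro DERIV_inverse_function[OF _ nz]) auto
qed

(* F_pq p q = pq_integral (-1) p q and G_pq p q = pq_integral 1 p q, so both cases share one
   development; pq_domain c q is the interval on which the integrand is defined. *)
definition pq_integral :: "real \<Rightarrow> real \<Rightarrow> real \<Rightarrow> real \<Rightarrow> real" where
  "pq_integral c p q y = integral {0..y} (\<lambda>t. (1 + c * t powr q) powr (-1/p))"

definition pq_domain :: "real \<Rightarrow> real \<Rightarrow> real set" where
  "pq_domain c q = {t. 0 \<le> t \<and> 0 < 1 + c * t powr q}"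

lemma F_pq_eq_pq_integral: "F_pq p q = pq_integral (-1) p q"
  by (simp add: fun_eq_iff F_pq_def pq_integral_def)

lemma G_pq_eq_pq_integral: "G_pq p q = pq_integral 1 p q"
  by (simp add: fun_eq_iff G_pq_def pq_integral_def)

lemma pq_integral_0 [simp]: "pq_integral c p q 0 = 0"
  by (simp add: pq_integral_def)

lemma pq_domain_neg:
  assumes q: "0 < q" and c: "c < 0"
  shows "pq_domain c q = {0..<(-1/c) powr (1/q)}"
proof -
  define m where "m = (-1/c) powr (1/q)"
  have m: "0 \<le> m" "m powr q = -1/c"
    using q c by (simp_all add: m_def powr_powr)
  have "0 < 1 + c * t powr q \<longleftrightarrow> t < m" if "0 \<le> t" for t
  proof -
    have "0 < 1 + c * t powr q \<longleftrightarrow> t powr q < m powr q"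
      using c by (simp add: m field_simps, linarith)
    also have "\<dots> \<longleftrightarrow> t < m"
      using q m that by (meson not_le powr_less_mono2 powr_mono2 less_imp_le)
    finally show ?thesis .
  qed
  then show ?thesis by (auto simp: pq_domain_def m_def)
qed

lemma pq_domain_nonneg:
  assumes "0 \<le> c"
  shows "pq_domain c q = {0..}"
  using assms by (auto simp: pq_domain_def add_pos_nonneg)

lemma pq_domain_downward_closed:
  assumes "0 < q" "y \<in> pq_domain c q" "0 \<le> t" "t \<le> y"
  shows "t \<in> pq_domain c q"
  using assms by (cases "c < 0") (auto simp: pq_domain_neg pq_domain_nonneg)

lemma pq_domain_extends_right:
  assumes "0 < q" "y \<in> pq_domain c q"
  obtains b where "y < b" "b \<in> pq_domain c q"
proof (cases "c < 0")
  case True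
  with assms show ?thesis
    by (intro that[of "(y + (-1/c) powr (1/q)) / 2"]) (auto simp: pq_domain_neg)
next
  case False
  with assms show ?thesis
    by (intro that[of "y + 1"]) (auto simp: pq_domain_nonneg)
qed

lemma continuous_on_pq_integrand:
  assumes q: "0 < q" and b: "b \<in> pq_domain c q"
  shows "continuous_on {0..b} (\<lambda>t. (1 + c * t powr q) powr e)"
proof -
  have "continuous_on {0..b} (\<lambda>t::real. t powr q)"
    using q by (intro continuous_on_powr' continuous_intros) auto
  moreover have "\<forall>t\<in>{0..b}. 0 < 1 + c * t powr q"
    using pq_domain_downward_closed[OF q b] by (auto simp: pq_domain_def)
  ultimately show ?thesis
    using q by (intro continuous_on_powr' continuous_intros) auto
qed

lemma continuous_on_pq_integral:
  assumes "0 < q" "b \<in> pq_domain c q"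
  shows "continuous_on {0..b} (pq_integral c p q)"
  unfolding pq_integral_def[abs_def]
  by (rule DERIV_continuous_on[OF integral_has_real_derivative])
     (use continuous_on_pq_integrand[OF assms] in auto)

lemma has_real_derivative_pq_integral:
  assumes q: "0 < q" and y: "0 < y" "y \<in> pq_domain c q"
  shows "(pq_integral c p q has_real_derivative (1 + c * y powr q) powr (-1/p)) (at y)"
proof -
  obtain b where b: "y < b" "b \<in> pq_domain c q"
    using pq_domain_extends_right[OF q y(2)] .
  have "(pq_integral c p q has_real_derivative (1 + c * y powr q) powr (-1/p)) (at y within {0..b})"
    unfolding pq_integral_def[abs_def]
    using continuous_on_pq_integrand[OF q b(2)] y b by (intro integral_has_real_derivative) auto
  moreover have "at y within {0..b} = at y"
    using y b by (intro at_within_interior) auto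
  ultimately show ?thesis by simp
qed

lemma strict_mono_on_pq_integral:
  assumes q: "0 < q"
  shows "strict_mono_on (pq_domain c q) (pq_integral c p q)"
proof (rule strict_mono_onI)
  fix a b assume a: "a \<in> pq_domain c q" and b: "b \<in> pq_domain c q" and "a < b"
  then have dom: "t \<in> pq_domain c q" if "a \<le> t" "t \<le> b" for t
    using pq_domain_downward_closed[OF q b, of t] that by (auto simp: pq_domain_def)
  show "pq_integral c p q a < pq_integral c p q b"
  proof (rule DERIV_pos_imp_increasing_open[OF \<open>a < b\<close>])
    fix t assume "a < t" "t < b"
    with a dom[of t] have "0 < t" "t \<in> pq_domain c q" by (auto simp: pq_domain_def)
    then show "\<exists>d. (pq_integral c p q has_real_derivative d) (at t) \<and> 0 < d"
      using has_real_derivative_pq_integral[OF q] by (fastforce simp: pq_domain_def)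
  next
    show "continuous_on {a..b} (pq_integral c p q)"
      by (rule continuous_on_subset[OF continuous_on_pq_integral[OF q b]]) (use a in \<open>auto simp: pq_domain_def\<close>)
  qed
qed

lemma pq_integral_attains:
  assumes q: "0 < q" and b: "b \<in> pq_domain c q" and x: "0 < x" "x < pq_integral c p q b"
  obtains y where "0 < y" "y \<in> pq_domain c q" "pq_integral c p q y = x"
proof -
  obtain y where y: "0 \<le> y" "y \<le> b" "pq_integral c p q y = x"
    using IVT'[of "pq_integral c p q" 0 x b] x continuous_on_pq_integral[OF q b] b
    by (auto simp: pq_domain_def)
  show ?thesis
  proof (rule that)
    show "0 < y" using y x by (cases "y = 0") auto
    show "y \<in> pq_domain c q" using pq_domain_downward_closed[OF q b y(1,2)] .
  qed (fact y(3))
qed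

lemma has_real_derivative_mult_pq_power:
  assumes t: "0 < t" and u: "0 < 1 + c * t powr q"
  shows "((\<lambda>t. t * (1 + c * t powr q) powr e) has_real_derivative
      (1 + c * t powr q) powr (e - 1) * ((1 + e * q) * (1 + c * t powr q) - e * q)) (at t)"
proof -
  define u where "u = 1 + c * t powr q"
  have "((\<lambda>t. 1 + c * t powr q) has_real_derivative c * (q * t powr (q - 1))) (at t)"
    using t by (auto intro!: derivative_eq_intros)
  from DERIV_mult[OF DERIV_ident DERIV_fun_powr[OF this u]]
  have "((\<lambda>t. t * (1 + c * t powr q) powr e) has_real_derivative
      1 * u powr e + e * u powr (e - 1) * (c * (q * t powr (q - 1))) * t) (at t)"
    by (simp only: u_def of_nat_1)
  moreover have "u powr (e - 1) * ((1 + e * q) * u - e * q)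
      = 1 * u powr e + e * u powr (e - 1) * (c * (q * t powr (q - 1))) * t"
  proof -
    have "u = 1 + c * (t powr (q - 1) * t)"
      using t by (simp add: u_def powr_diff)
    then have "V * ((1 + e * q) * u - e * q) = 1 * (V * u) + e * V * (c * (q * t powr (q - 1))) * t"
      for V by (simp add: algebra_simps)
    moreover have "u powr e = u powr (e - 1) * u"
      using u by (simp add: u_def powr_diff)
    ultimately show ?thesis by simp
  qed
  ultimately show ?thesis by (simp add: u_def)
qed

lemma pq_integral_less:
  assumes q: "0 < q" and pq: "q / (q + 1) < p" and c: "c \<noteq> 0"
    and y: "0 < y" "y \<in> pq_domain c q"
  shows "pq_integral c p q y < y * (1 + c * y powr q) powr (-1 / (p * (q + 1)))"
proof -
  define a where "a = 1 / (p * (q + 1))"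
  define s where "s = q * a"
  have p: "0 < p" by (rule order.strict_trans[OF divide_pos_pos pq]) (use q in auto)
  have s: "0 < s" "s < 1" unfolding s_def a_def using p q pq by (auto simp: field_simps)
  have "1 / p = a * (q + 1)" using q by (simp add: a_def)
  then have "-1/p = (- a - 1) + (1 - s)" by (simp add: s_def algebra_simps)
  then have split_power: "u powr (-1/p) = u powr (- a - 1) * u powr (1 - s)" for u :: real
    by (simp only: powr_add)
  define h where "h t = t * (1 + c * t powr q) powr (- a) - pq_integral c p q t" for t
  have "h 0 < h y"
  proof (rule DERIV_pos_imp_increasing_open[OF y(1)])
    fix t assume t: "0 < t" "t < y"
    define u where "u = 1 + c * t powr q"
    have dom: "t \<in> pq_domain c q"
      using pq_domain_downward_closed[OF q y(2)] t by simp
    then have u: "0 < u" "u \<noteq> 1"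
      using t c by (auto simp: u_def pq_domain_def)
    have "(h has_real_derivative
        u powr (- a - 1) * ((1 + - a * q) * u - - a * q) - u powr (-1/p)) (at t)"
      unfolding h_def u_def
      using has_real_derivative_mult_pq_power[of t c q "- a"] has_real_derivative_pq_integral[OF q t(1) dom]
        u(1) t(1) by (intro DERIV_diff) (auto simp: u_def)
    moreover have "u powr (- a - 1) * ((1 + - a * q) * u - - a * q) - u powr (-1/p)
        = u powr (- a - 1) * ((1 - s) * u + s - u powr (1 - s))"
      unfolding split_power by (simp add: s_def algebra_simps)
    moreover have "0 < u powr (- a - 1) * ((1 - s) * u + s - u powr (1 - s))"
      using weighted_AM_GM_strict[OF s u] u by simp
    ultimately show "\<exists>d. (h has_real_derivative d) (at t) \<and> 0 < d" by auto
  next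
    show "continuous_on {0..y} h"
      unfolding h_def
      by (intro continuous_intros continuous_on_pq_integrand continuous_on_pq_integral q y)
  qed
  then show ?thesis by (simp add: h_def a_def)
qed

lemma pq_integral_ratio_sum_gt_two:
  assumes q: "0 < q" and pq: "q / (q + 1) < p" and r: "r = p * q / (p * q + p - q)"
    and c: "c \<noteq> 0" and y: "0 < y" "y \<in> pq_domain c q"
  defines "x \<equiv> pq_integral c p q y" and "u \<equiv> 1 + c * y powr q"
  shows "(y / x) powr p + ((y / (u powr (1/p)) powr (p/q)) / x) powr r > 2"
proof -
  have p: "0 < p" by (rule order.strict_trans[OF divide_pos_pos pq]) (use q in auto)
  have u: "0 < u" using y by (simp add: u_def pq_domain_def)
  have "0 \<in> pq_domain c q" by (simp add: pq_domain_def)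
  then have x: "0 < x"
    using strict_mono_onD[OF strict_mono_on_pq_integral[OF q] _ y(2) y(1)] by (simp add: x_def)
  have "u powr (1 / (p * (q + 1))) * x < u powr (1 / (p * (q + 1))) * (y * u powr (-1 / (p * (q + 1))))"
    using pq_integral_less[OF q pq c y] u by (simp add: x_def u_def)
  then have "u powr (1 / (p * (q + 1))) < y / x"
    using u x by (simp add: powr_minus_divide field_simps)
  from powr_sum_gt_two[OF q pq r u this]
  show ?thesis
    using u p by (simp add: powr_powr powr_minus_divide field_simps)
qed

lemma pq_integral_inverse:
  assumes g: "\<And>x. g x = (THE y. y \<in> pq_domain c q \<and> pq_integral c p q y = x)"
    and q: "0 < q" and y: "0 < y" "y \<in> pq_domain c q"
  shows "g (pq_integral c p q y) = y"
    and "deriv g (pq_integral c p q y) = (1 + c * y powr q) powr (1/p)"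
proof -
  obtain b where b: "y < b" "b \<in> pq_domain c q"
    using pq_domain_extends_right[OF q y(2)] .
  have dom: "{y/2..b} \<subseteq> pq_domain c q"
    using pq_domain_downward_closed[OF q b(2)] y by auto
  have der: "(pq_integral c p q has_real_derivative (1 + c * z powr q) powr (-1/p)) (at z)"
    if "z \<in> {y/2..b}" for z
    using has_real_derivative_pq_integral[OF q] that dom y by auto
  have "0 < 1 + c * y powr q" using y by (simp add: pq_domain_def)
  then have "(1 + c * y powr q) powr (-1/p) \<noteq> 0" by simp
  note inverse = has_real_derivative_THE_inverse[OF g strict_mono_on_pq_integral[OF q] _ _ dom der this]
  show "g (pq_integral c p q y) = y"
    using inverse(1) y b by simp
  show "deriv g (pq_integral c p q y) = (1 + c * y powr q) powr (1/p)"
    using DERIV_imp_deriv[OF inverse(2)] y b \<open>0 < 1 + c * y powr q\<close> by (simp add: powr_minus_divide)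
qed

(* 1 - c phi(t)^q = 1 / (1 + c t^q) for phi(t) = t (1 + c t^q)^(-1/q), and the exponents
   match because 1/p + 1/r = 1 + 1/q. *)
lemma pq_integral_substitution:
  assumes q: "0 < q" and pq: "q / (q + 1) < p" and r: "r = p * q / (p * q + p - q)"
    and \<sigma>: "\<sigma> \<in> pq_domain c q"
  shows "pq_integral (- c) p q (\<sigma> * (1 + c * \<sigma> powr q) powr (-1/q)) = pq_integral c r q \<sigma>"
proof -
  define \<phi> where "\<phi> = (\<lambda>t. t * (1 + c * t powr q) powr (-1/q))"
  have p: "0 < p" by (rule order.strict_trans[OF divide_pos_pos pq]) (use q in auto)
  have D: "0 < p * q + p - q" using pq q by (simp add: field_simps)
  have dom: "t \<in> pq_domain c q" if "0 \<le> t" "t \<le> \<sigma>" for t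
    using pq_domain_downward_closed[OF q \<sigma> that] .
  have \<phi>_base: "1 + - c * \<phi> t powr q = inverse (1 + c * t powr q)" if "t \<in> pq_domain c q" for t
  proof -
    have u: "0 < 1 + c * t powr q" using that by (simp add: pq_domain_def)
    have "\<phi> t powr q = t powr q / (1 + c * t powr q)"
      using q u by (simp add: \<phi>_def powr_mult powr_powr)
    then show ?thesis using u by (simp add: field_simps)
  qed
  have \<phi>_dom: "\<phi> t \<in> pq_domain (- c) q" if "t \<in> pq_domain c q" for t
  proof -
    have "0 < 1 + - c * \<phi> t powr q"
      unfolding \<phi>_base[OF that] using that by (simp add: pq_domain_def)
    moreover have "0 \<le> \<phi> t" using that by (simp add: \<phi>_def pq_domain_def)
    ultimately show ?thesis by (simp add: pq_domain_def)
  qed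
  have \<phi>_deriv: "(\<phi> has_real_derivative (1 + c * t powr q) powr (-1/q - 1)) (at t)"
    if "0 < t" "t \<in> pq_domain c q" for t
    using has_real_derivative_mult_pq_power[of t c q "-1/q"] that q
    by (simp add: \<phi>_def pq_domain_def)
  have \<phi>_cont: "continuous_on {0..\<sigma>} \<phi>"
    unfolding \<phi>_def by (intro continuous_intros continuous_on_pq_integrand q \<sigma>)
  have \<phi>_le: "\<phi> t \<le> \<phi> \<sigma>" if "0 \<le> t" "t \<le> \<sigma>" for t
  proof (cases "t = \<sigma>")
    case False
    then have "\<phi> t < \<phi> \<sigma>"
    proof (intro DERIV_pos_imp_increasing_open[of t \<sigma> \<phi>])
      show "\<exists>d. (\<phi> has_real_derivative d) (at s) \<and> 0 < d" if "t < s" "s < \<sigma>" for s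
        using \<phi>_deriv[of s] dom[of s] that \<open>0 \<le> t\<close> by (auto simp: pq_domain_def)
      show "continuous_on {t..\<sigma>} \<phi>"
        using \<phi>_cont by (rule continuous_on_subset) (use \<open>0 \<le> t\<close> in auto)
    qed (use that in auto)
    then show ?thesis by simp
  qed simp
  define k where "k t = pq_integral (- c) p q (\<phi> t) - pq_integral c r q t" for t
  have "k \<sigma> = k 0"
  proof (cases "\<sigma> = 0")
    case False
    then have "0 < \<sigma>" using \<sigma> by (simp add: pq_domain_def)
    then show ?thesis
    proof (rule DERIV_isconst_end[of 0 \<sigma> k])
      have "continuous_on {0..\<sigma>} (\<lambda>t. pq_integral (- c) p q (\<phi> t))"
        using continuous_on_pq_integral[OF q \<phi>_dom[OF \<sigma>]] \<phi>_cont
        by (rule continuous_on_compose2) (use \<phi>_le in \<open>auto simp: \<phi>_def\<close>)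
      then show "continuous_on {0..\<sigma>} k"
        unfolding k_def by (intro continuous_intros continuous_on_pq_integral q \<sigma>)
    next
      fix t assume t: "0 < t" "t < \<sigma>"
      define u where "u = 1 + c * t powr q"
      have t_dom: "t \<in> pq_domain c q" using t dom by simp
      then have u: "0 < u" by (simp add: u_def pq_domain_def)
      have "0 < \<phi> t" using t u by (simp add: \<phi>_def u_def)
      have "((\<lambda>s. pq_integral (- c) p q (\<phi> s)) has_real_derivative
          (1 + - c * \<phi> t powr q) powr (-1/p) * u powr (-1/q - 1)) (at t)"
        unfolding u_def
        by (rule DERIV_chain2[OF has_real_derivative_pq_integral[OF q \<open>0 < \<phi> t\<close> \<phi>_dom[OF t_dom]]
              \<phi>_deriv[OF t(1) t_dom]])
      from DERIV_diff[OF this has_real_derivative_pq_integral[OF q t(1) t_dom]]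
      have "(k has_real_derivative inverse u powr (-1/p) * u powr (-1/q - 1) - u powr (-1/r)) (at t)"
        unfolding k_def \<phi>_base[OF t_dom] u_def .
      moreover have "inverse u powr (-1/p) * u powr (-1/q - 1) = u powr (1/p + (-1/q - 1))"
        by (simp add: inverse_powr powr_minus powr_add)
      moreover have "1/p + (-1/q - 1) = -1/r"
        unfolding r using p q D by (simp add: field_simps)
      ultimately show "(k has_real_derivative 0) (at t)" by simp
    qed
  qed simp
  then show ?thesis by (simp add: k_def \<phi>_def)
qed

lemma exists_F_pq_gt:
  assumes q: "0 < q" and x: "0 \<le> x" and lt: "2 * ennreal x < pi_pq p q"
  obtains y where "0 \<le> y" "y < 1" "x < F_pq p q y"
proof -
  define f where "f t = ennreal ((1 - t powr q) powr (-1/p))" for t :: real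
  define y where "y n = 1 - inverse (real (Suc n))" for n
  have y: "0 \<le> y n" "y n < 1" for n
    by (auto simp: y_def field_simps)
  have "incseq y"
    by (auto intro!: incseq_SucI simp: y_def field_simps)
  have "y \<longlonglongrightarrow> 1"
    unfolding y_def using tendsto_diff[OF tendsto_const LIMSEQ_inverse_real_of_nat] by simp
  have F_eq: "(\<integral>\<^sup>+ t. indicator {0..y n} t * f t \<partial>lborel) = ennreal (F_pq p q (y n))" for n
  proof -
    have "continuous_on {0..y n} (\<lambda>t. (1 - t powr q) powr (-1/p))"
      using continuous_on_pq_integrand[OF q, of "y n" "-1"] y[of n]
      by (simp add: pq_domain_neg[OF q])
    then have "((\<lambda>t. (1 - t powr q) powr (-1/p)) has_integral F_pq p q (y n)) {0..y n}"
      unfolding F_pq_def by (intro integrable_integral integrable_continuous_real)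
    from nn_integral_has_integral_lebesgue'[OF _ this] show ?thesis
      by (simp add: f_def mult.commute)
  qed
  have "(\<lambda>n. \<integral>\<^sup>+ t. indicator {0..y n} t * f t \<partial>lborel)
      \<longlonglongrightarrow> (\<integral>\<^sup>+ t. indicator {0..<1} t * f t \<partial>lborel)"
  proof (rule nn_integral_LIMSEQ)
    show "incseq (\<lambda>n t. indicator {0..y n} t * f t)"
      using \<open>incseq y\<close> by (auto simp: incseq_def le_fun_def indicator_def intro: order_trans)
    show "(\<lambda>t. indicator {0..y n} t * f t) \<in> borel_measurable lborel" for n
      unfolding f_def by measurable
    show "(\<lambda>n. indicator {0..y n} t * f t) \<longlonglongrightarrow> indicator {0..<1} t * f t" for t
    proof (rule tendsto_eventually)
      have "\<forall>\<^sub>F n in sequentially. t < 1 \<longrightarrow> t < y n"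
        using order_tendstoD(1)[OF \<open>y \<longlonglongrightarrow> 1\<close>] by (auto elim: eventually_mono)
      then show "\<forall>\<^sub>F n in sequentially. indicator {0..y n} t * f t = indicator {0..<1} t * f t"
      proof (rule eventually_mono)
        fix n assume "t < 1 \<longrightarrow> t < y n"
        then have "t \<in> {0..y n} \<longleftrightarrow> t \<in> {0..<1}" using y[of n] by auto
        then show "indicator {0..y n} t * f t = indicator {0..<1} t * f t"
          by (simp add: indicator_def)
      qed
    qed
  qed
  moreover have "ennreal x < (\<integral>\<^sup>+ t. indicator {0..<1} t * f t \<partial>lborel)"
  proof (rule ccontr)
    assume "\<not> ?thesis"
    then have "pi_pq p q \<le> 2 * ennreal x"
      by (auto simp: pi_pq_def f_def not_less intro: mult_left_mono)
    with lt show False by simp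
  qed
  ultimately have "\<forall>\<^sub>F n in sequentially. ennreal x < ennreal (F_pq p q (y n))"
    unfolding F_eq by (rule order_tendstoD)
  then obtain n where "ennreal x < ennreal (F_pq p q (y n))"
    by (auto dest: eventually_happens)
  then show ?thesis
    using that[OF y[of n]] x by (simp add: ennreal_less_iff)
qed

lemma sin_cos_pq_F_pq:
  assumes q: "0 < q" and y: "0 < y" "y < 1"
  shows "sin_pq p q (F_pq p q y) = y" "cos_pq p q (F_pq p q y) = (1 - y powr q) powr (1/p)"
proof -
  have "sin_pq p q x = (THE y. y \<in> pq_domain (-1) q \<and> pq_integral (-1) p q y = x)" for x
    by (simp add: sin_pq_def pq_domain_neg[OF q] F_pq_eq_pq_integral)
  note inverse = pq_integral_inverse[OF this q y(1)]
  have "y \<in> pq_domain (-1) q" using y by (simp add: pq_domain_neg[OF q])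
  then show "sin_pq p q (F_pq p q y) = y" "cos_pq p q (F_pq p q y) = (1 - y powr q) powr (1/p)"
    using inverse by (simp_all add: cos_pq_def F_pq_eq_pq_integral)
qed

lemma sinh_cosh_pq_G_pq:
  assumes q: "0 < q" and y: "0 < y"
  shows "sinh_pq p q (G_pq p q y) = y" "cosh_pq p q (G_pq p q y) = (1 + y powr q) powr (1/p)"
proof -
  have "sinh_pq p q x = (THE y. y \<in> pq_domain 1 q \<and> pq_integral 1 p q y = x)" for x
    by (simp add: sinh_pq_def pq_domain_nonneg G_pq_eq_pq_integral)
  note inverse = pq_integral_inverse[OF this q y(1)]
  have "y \<in> pq_domain 1 q" using y by (simp add: pq_domain_nonneg)
  then show "sinh_pq p q (G_pq p q y) = y" "cosh_pq p q (G_pq p q y) = (1 + y powr q) powr (1/p)"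
    using inverse by (simp_all add: cosh_pq_def G_pq_eq_pq_integral)
qed

lemma F_pq_attains:
  assumes q: "0 < q" and x: "0 < x" "2 * ennreal x < pi_pq p q"
  obtains y where "0 < y" "y < 1" "F_pq p q y = x"
proof -
  obtain b where "b \<in> pq_domain (-1) q" "x < pq_integral (-1) p q b"
    using exists_F_pq_gt[OF q _ x(2)] x(1) by (auto simp: pq_domain_neg[OF q] F_pq_eq_pq_integral)
  then obtain y where "0 < y" "y \<in> pq_domain (-1) q" "pq_integral (-1) p q y = x"
    by (rule pq_integral_attains[OF q _ x(1)])
  then show ?thesis
    using that by (simp add: pq_domain_neg[OF q] F_pq_eq_pq_integral)
qed

lemma G_pq_attains:
  assumes q: "0 < q" and pq: "q / (q + 1) < p" and r: "r = p * q / (p * q + p - q)"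
    and x: "0 < x" "2 * ennreal x < pi_pq r q"
  obtains y where "0 < y" "G_pq p q y = x"
proof -
  obtain \<sigma> where \<sigma>: "\<sigma> \<in> pq_domain (-1) q" "x < pq_integral (-1) r q \<sigma>"
    using exists_F_pq_gt[OF q _ x(2)] x(1) by (auto simp: pq_domain_neg[OF q] F_pq_eq_pq_integral)
  define b where "b = \<sigma> * (1 + -1 * \<sigma> powr q) powr (-1/q)"
  have "b \<in> pq_domain 1 q"
    using \<sigma>(1) by (simp add: b_def pq_domain_nonneg pq_domain_neg[OF q])
  moreover have "x < pq_integral 1 p q b"
    using \<sigma>(2) pq_integral_substitution[OF q pq r \<sigma>(1)] by (simp add: b_def)
  ultimately obtain y where "0 < y" "y \<in> pq_domain 1 q" "pq_integral 1 p q y = x"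
    by (rule pq_integral_attains[OF q _ x(1)])
  then show ?thesis
    using that by (simp add: G_pq_eq_pq_integral)
qed

theorem theorem3p1:
  fixes p q r :: real
  assumes "0 < q" and "q / (q + 1) < p"
    and "r = p * q / (p * q + p - q)"
  shows "(\<forall>x. 0 < x \<and> 2 * ennreal x < pi_pq p q \<longrightarrow>
            (sin_pq p q x / x) powr p + (tam_pq p q x / x) powr r > 2)
       \<and> (\<forall>x. 0 < x \<and> 2 * ennreal x < pi_pq r q \<longrightarrow>
            (sinh_pq p q x / x) powr p + (tamh_pq p q x / x) powr r > 2)"
proof (intro conjI allI impI; elim conjE)
  note q = assms(1) and pq = assms(2) and r = assms(3)
  fix x :: real assume "0 < x" "2 * ennreal x < pi_pq p q"
  then obtain y where y: "0 < y" "y < 1" "F_pq p q y = x"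
    by (rule F_pq_attains[OF q])
  then have "y \<in> pq_domain (-1) q" by (simp add: pq_domain_neg[OF q])
  from pq_integral_ratio_sum_gt_two[OF q pq r _ y(1) this]
  show "(sin_pq p q x / x) powr p + (tam_pq p q x / x) powr r > 2"
    unfolding y(3)[symmetric] tam_pq_def sin_cos_pq_F_pq[OF q y(1,2)] by (simp add: F_pq_eq_pq_integral)
next
  note q = assms(1) and pq = assms(2) and r = assms(3)
  fix x :: real assume "0 < x" "2 * ennreal x < pi_pq r q"
  then obtain y where y: "0 < y" "G_pq p q y = x"
    by (rule G_pq_attains[OF q pq r])
  then have "y \<in> pq_domain 1 q" by (simp add: pq_domain_nonneg)
  from pq_integral_ratio_sum_gt_two[OF q pq r _ y(1) this]
  show "(sinh_pq p q x / x) powr p + (tamh_pq p q x / x) powr r > 2"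
    unfolding y(2)[symmetric] tamh_pq_def sinh_cosh_pq_G_pq[OF q y(1)] by (simp add: G_pq_eq_pq_integral)
qed

end
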